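(* For $n\ge 3$, $M_2(CP_{n-1})\simeq M_2(CC_n)\simeq S^{2n-1}$, where $CP_{n-1}$ is the clawed path of length $n-1$ and $CC_n$ is the clawed $n$-cycle.
   Context: A path of length $k$ has $k$ edges. For a graph $G$ of maximum degree at most $3$, the clawed graph $CG$ is obtained by subdividing every edge of $G$ and then attaching new leaves to every original vertex so that every original vertex has degree exactly $3$; $CP_{k}$ is the clawed graph of the path of length $k$ and $CC_n$ is the clawed graph of the cycle on $n$ vertices. $M_2(G)$ is the simplicial complex whose vertices are the edges of $G$ and whose faces are the $2$-matchings of $G$ (edge sets in which every vertex has degree at most $2$). *)

theory Defs
  imports "HOL-Analysis.Analysis"
begin

text \<open>Simple graphs are given by an edge set: a set of 2-element vertex sets.\<close>

definition vdeg :: "'a set set \<Rightarrow> 'a \<Rightarrow> nat" where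
  "vdeg E v = card {e \<in> E. v \<in> e}"

text \<open>Vertices of the clawed graph: original vertices, subdivision vertices
  (one per edge), and attached leaves.\<close>
datatype 'a cvert = Orig 'a | Sub "'a set" | Leaf 'a nat

text \<open>Clawed graph of a graph with vertex set V and edge set E (max degree at most 3):
  subdivide every edge, and attach 3 - deg v new leaves to each original vertex v.\<close>
definition clawed_edges :: "'a set \<Rightarrow> 'a set set \<Rightarrow> 'a cvert set set" where
  "clawed_edges V E =
     {{Orig u, Sub e} | u e. e \<in> E \<and> u \<in> e}
   \<union> {{Orig v, Leaf v i} | v i. v \<in> V \<and> i < 3 - vdeg E v}"

definition path_edges :: "nat \<Rightarrow> nat set set" where
  "path_edges k = {{i, Suc i} | i. i < k}"

definition cycle_edges :: "nat \<Rightarrow> nat set set" where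
  "cycle_edges n = {{i, Suc i mod n} | i. i < n}"

definition CP :: "nat \<Rightarrow> nat cvert set set" where
  "CP k = clawed_edges {0..k} (path_edges k)"

definition CC :: "nat \<Rightarrow> nat cvert set set" where
  "CC n = clawed_edges {0..<n} (cycle_edges n)"

definition two_matchings :: "'a set set \<Rightarrow> 'a set set set" where
  "two_matchings E = {F. F \<subseteq> E \<and> (\<forall>v. card {e \<in> F. v \<in> e} \<le> 2)}"

text \<open>Geometric realization of a finite simplicial complex with vertex set V and
  face set K (closed under subsets), as barycentric-coordinate functions
  inside the product topology on 'a \<Rightarrow> real.\<close>
definition geom_realization :: "'a set \<Rightarrow> 'a set set \<Rightarrow> ('a \<Rightarrow> real) topology" where
  "geom_realization V K = subtopology (powertop_real UNIV)
     {f. (\<forall>v. 0 \<le> f v) \<and> (\<forall>v. v \<notin> V \<longrightarrow> f v = 0) \<and> sum f V = 1 \<and> {v. f v \<noteq> 0} \<in> K}"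

definition M2 :: "'a set set \<Rightarrow> ('a set \<Rightarrow> real) topology" where
  "M2 E = geom_realization E (two_matchings E)"

end

theory Submission
  imports Defs
begin

(* Every edge of a clawed graph contains exactly one original vertex, so the edges split into
   claws, one 3-edge star at each original vertex, while subdivision vertices and leaves have
   degree at most 2. Hence a set of edges is a 2-matching iff it contains no complete claw, and
   M_2 of a clawed graph with n original vertices is the join of n triangle boundaries, which is
   S^(2n-1). Concretely, (a, b, c) |-> (a - c, b - c) maps the cone {(a, b, c) >= 0 : min = 0}
   over a triangle boundary bijectively onto R^2, with inverse (x, y) |-> (x + s, y + s, s) for
   s = max 0 (max (-x) (-y)); doing this in every claw and normalising (coordinate sum 1 on one
   side, Euclidean norm 1 on the other) gives the homeomorphism. CP_(n-1) and CC_n both have n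
   original vertices. *)


section \<open>Joins of triangle boundaries\<close>

definition realization_points :: "'a set \<Rightarrow> 'a set set \<Rightarrow> ('a \<Rightarrow> real) set" where
  "realization_points V K =
     {f. (\<forall>v. 0 \<le> f v) \<and> (\<forall>v. v \<notin> V \<longrightarrow> f v = 0) \<and> sum f V = 1 \<and> {v. f v \<noteq> 0} \<in> K}"

lemma geom_realization_eq:
  "geom_realization V K = subtopology (powertop_real UNIV) (realization_points V K)"
  unfolding geom_realization_def realization_points_def ..

definition sphere_coords :: "nat \<Rightarrow> (nat \<Rightarrow> real) set" where
  "sphere_coords k = {y. (\<Sum>i<k. y i ^ 2) = 1 \<and> (\<forall>i\<ge>k. y i = 0)}"

lemma nsphere_eq_sphere_coords:
  "nsphere n = subtopology (powertop_real UNIV) (sphere_coords (Suc n))"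
proof -
  have "{..n} = {..<Suc n}" "\<And>i. (n < i) = (Suc n \<le> i)" by auto
  then show ?thesis unfolding nsphere sphere_coords_def by simp
qed

definition triangle_boundaries_join :: "nat \<Rightarrow> (nat \<Rightarrow> 'e) \<Rightarrow> 'e set set" where
  "triangle_boundaries_join m t =
     {F. F \<subseteq> t ` {..<3*m} \<and> (\<forall>j<m. \<not> {t (3*j), t (3*j+1), t (3*j+2)} \<subseteq> F)}"

lemma mem_realization_points_triangle_boundaries_join:
  "f \<in> realization_points (t ` {..<3*m}) (triangle_boundaries_join m t) \<longleftrightarrow>
     (\<forall>v. 0 \<le> f v) \<and> (\<forall>v. v \<notin> t ` {..<3*m} \<longrightarrow> f v = 0) \<and> sum f (t ` {..<3*m}) = 1
     \<and> (\<forall>j<m. f (t (3*j)) = 0 \<or> f (t (3*j+1)) = 0 \<or> f (t (3*j+2)) = 0)"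
  unfolding realization_points_def triangle_boundaries_join_def by auto

definition block_coords :: "nat \<Rightarrow> (nat \<Rightarrow> 'e) \<Rightarrow> ('e \<Rightarrow> real) \<Rightarrow> nat \<Rightarrow> real" where
  "block_coords m t f i =
     (if i < 2*m then f (t (3*(i div 2) + i mod 2)) - f (t (3*(i div 2) + 2)) else 0)"

definition block_shift :: "(nat \<Rightarrow> real) \<Rightarrow> nat \<Rightarrow> real" where
  "block_shift y j = max 0 (max (- y (2*j)) (- y (2*j+1)))"

definition block_lift :: "(nat \<Rightarrow> real) \<Rightarrow> nat \<Rightarrow> real" where
  "block_lift y k = (if k mod 3 = 2 then 0 else y (2*(k div 3) + k mod 3)) + block_shift y (k div 3)"

definition vertex_lift :: "nat \<Rightarrow> (nat \<Rightarrow> 'e) \<Rightarrow> (nat \<Rightarrow> real) \<Rightarrow> 'e \<Rightarrow> real" where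
  "vertex_lift m t y e =
     (if e \<in> t ` {..<3*m} then block_lift y (the_inv_into {..<3*m} t e) else 0)"

lemma block_coords_simps:
  assumes "j < m"
  shows "block_coords m t f (2*j) = f (t (3*j)) - f (t (3*j+2))"
    and "block_coords m t f (2*j+1) = f (t (3*j+1)) - f (t (3*j+2))"
  using assms unfolding block_coords_def by auto

lemma block_lift_simps:
  "block_lift y (3*j) = y (2*j) + block_shift y j"
  "block_lift y (3*j+1) = y (2*j+1) + block_shift y j"
  "block_lift y (3*j+2) = block_shift y j"
proof -
  have "(3*j+1) div 3 = j" "(3*j+1) mod 3 = 1" "(3*j+2) div 3 = j" "(3*j+2) mod 3 = 2"
    by presburger+
  then show "block_lift y (3*j) = y (2*j) + block_shift y j"
    and "block_lift y (3*j+1) = y (2*j+1) + block_shift y j"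
    and "block_lift y (3*j+2) = block_shift y j"
    unfolding block_lift_def by simp_all
qed

lemma block_lift_nonneg: "block_lift y k \<ge> 0"
proof -
  define j where "j = k div 3"
  have "k = 3*j \<or> k = 3*j+1 \<or> k = 3*j+2" unfolding j_def by presburger
  moreover have "y (2*j) + block_shift y j \<ge> 0" "y (2*j+1) + block_shift y j \<ge> 0" "block_shift y j \<ge> 0"
    unfolding block_shift_def by auto
  ultimately show ?thesis by (auto simp only: block_lift_simps)
qed

lemma block_lift_zero [simp]: "block_lift (\<lambda>_. 0) k = 0"
  unfolding block_lift_def block_shift_def by simp

lemma block_lift_has_zero:
  "block_lift y (3*j) = 0 \<or> block_lift y (3*j+1) = 0 \<or> block_lift y (3*j+2) = 0"
  unfolding block_lift_simps block_shift_def by (auto simp: max_def)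

lemma block_lift_divide:
  assumes "c > 0"
  shows "block_lift (\<lambda>i. y i / c) k = block_lift y k / c"
proof -
  have "block_shift (\<lambda>i. y i / c) j = block_shift y j / c" for j
    using assms unfolding block_shift_def by (auto simp: max_def field_simps)
  then show ?thesis unfolding block_lift_def by (simp add: add_divide_distrib)
qed

lemma block_coords_divide: "block_coords m t (\<lambda>e. f e / c) i = block_coords m t f i / c"
  unfolding block_coords_def by (simp add: diff_divide_distrib)

lemma vertex_lift_divide:
  "c > 0 \<Longrightarrow> vertex_lift m t (\<lambda>i. y i / c) e = vertex_lift m t y e / c"
  unfolding vertex_lift_def by (simp add: block_lift_divide)

lemma continuous_map_powertop_real_component:
  "continuous_map (subtopology (powertop_real UNIV) S) euclideanreal (\<lambda>f. f i)"
  by (rule continuous_map_from_subtopology[OF continuous_map_product_projection[OF UNIV_I]])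

lemma continuous_map_block_coords:
  "continuous_map (subtopology (powertop_real UNIV) S) euclideanreal (\<lambda>f. block_coords m t f i)"
  unfolding block_coords_def
  by (simp add: continuous_map_diff continuous_map_powertop_real_component)

lemma continuous_map_block_lift:
  "continuous_map (subtopology (powertop_real UNIV) S) euclideanreal (\<lambda>y. block_lift y k)"
  unfolding block_lift_def block_shift_def
  by (intro continuous_map_add continuous_map_real_max continuous_map_minus
        continuous_map_canonical_const continuous_map_powertop_real_component)
    (simp add: continuous_map_powertop_real_component)

lemma continuous_map_vertex_lift:
  "continuous_map (subtopology (powertop_real UNIV) S) euclideanreal (\<lambda>y. vertex_lift m t y e)"
  unfolding vertex_lift_def by (simp add: continuous_map_block_lift)

context
  fixes m :: nat and t :: "nat \<Rightarrow> 'e"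
  assumes m_pos: "m \<ge> 1" and t_inj: "inj_on t {..<3*m}"
begin

lemma sum_image_t: "sum g (t ` {..<3*m}) = (\<Sum>k<3*m. g (t k))"
  using t_inj by (simp add: sum.reindex)

lemma vertex_lift_t: "k < 3*m \<Longrightarrow> vertex_lift m t y (t k) = block_lift y k"
  unfolding vertex_lift_def using t_inj by (simp add: the_inv_into_f_f)

lemma block_lift_block_coords:
  assumes f: "f \<in> realization_points (t ` {..<3*m}) (triangle_boundaries_join m t)"
    and k: "k < 3*m"
  shows "block_lift (block_coords m t f) k = f (t k)"
proof -
  define j where "j = k div 3"
  have j: "j < m" using k unfolding j_def by auto
  have "f (t (3*j)) \<ge> 0" "f (t (3*j+1)) \<ge> 0" "f (t (3*j+2)) \<ge> 0"
    and "f (t (3*j)) = 0 \<or> f (t (3*j+1)) = 0 \<or> f (t (3*j+2)) = 0"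
    using f j unfolding mem_realization_points_triangle_boundaries_join by auto
  then have shift: "block_shift (block_coords m t f) j = f (t (3*j+2))"
    unfolding block_shift_def block_coords_simps[OF j] by (auto simp: max_def)
  have "block_lift (block_coords m t f) (3*j) = f (t (3*j))"
    and "block_lift (block_coords m t f) (3*j+1) = f (t (3*j+1))"
    and "block_lift (block_coords m t f) (3*j+2) = f (t (3*j+2))"
    unfolding block_lift_simps block_coords_simps[OF j] shift by simp_all
  moreover have "k = 3*j \<or> k = 3*j+1 \<or> k = 3*j+2" unfolding j_def by auto
  ultimately show ?thesis by auto
qed

lemma block_coords_vertex_lift:
  assumes i: "i < 2*m"
  shows "block_coords m t (vertex_lift m t y) i = y i"
proof -
  define j where "j = i div 2"
  have j: "j < m" using i unfolding j_def by auto
  then have k: "3*j < 3*m" "3*j+1 < 3*m" "3*j+2 < 3*m" by auto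
  have "block_coords m t (vertex_lift m t y) (2*j) = y (2*j)"
    and "block_coords m t (vertex_lift m t y) (2*j+1) = y (2*j+1)"
    unfolding block_coords_simps[OF j] vertex_lift_t[OF k(1)] vertex_lift_t[OF k(2)]
      vertex_lift_t[OF k(3)] block_lift_simps by simp_all
  moreover have "i = 2*j \<or> i = 2*j+1" unfolding j_def by auto
  ultimately show ?thesis by auto
qed

lemma block_coords_sum_squares_pos:
  assumes f: "f \<in> realization_points (t ` {..<3*m}) (triangle_boundaries_join m t)"
  shows "(\<Sum>i<2*m. block_coords m t f i ^ 2) > 0"
proof (rule ccontr)
  assume "\<not> ?thesis"
  then have "\<forall>i<2*m. block_coords m t f i = 0"
    using sum_nonneg_eq_0_iff[of "{..<2*m}" "\<lambda>i. block_coords m t f i ^ 2"]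
    by (simp add: not_less order_antisym sum_nonneg)
  then have "block_coords m t f = (\<lambda>_. 0)" by (auto simp: block_coords_def)
  then have "\<forall>k<3*m. f (t k) = 0" using block_lift_block_coords[OF f] by simp
  then have "sum f (t ` {..<3*m}) = 0" by (simp add: sum_image_t)
  then show False using f unfolding mem_realization_points_triangle_boundaries_join by simp
qed

lemma vertex_lift_sum_pos:
  assumes y: "y \<in> sphere_coords (2*m)"
  shows "sum (vertex_lift m t y) (t ` {..<3*m}) > 0"
proof (rule ccontr)
  assume "\<not> ?thesis"
  moreover have nonneg: "vertex_lift m t y e \<ge> 0" for e
    unfolding vertex_lift_def by (simp add: block_lift_nonneg)
  ultimately have on_T: "\<forall>e \<in> t ` {..<3*m}. vertex_lift m t y e = 0"
    using sum_nonneg_eq_0_iff[of "t ` {..<3*m}" "vertex_lift m t y"] by (simp add: order_antisym sum_nonneg)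
  have "vertex_lift m t y e = 0" for e
    using on_T by (cases "e \<in> t ` {..<3*m}") (auto simp: vertex_lift_def)
  then have "vertex_lift m t y = (\<lambda>_. 0)" by blast
  then have "\<forall>i<2*m. y i = 0"
    using block_coords_vertex_lift[of _ y] by (simp add: block_coords_def)
  then show False using y unfolding sphere_coords_def by simp
qed

definition to_sphere :: "('e \<Rightarrow> real) \<Rightarrow> nat \<Rightarrow> real" where
  "to_sphere f = (\<lambda>i. block_coords m t f i / sqrt (\<Sum>i<2*m. block_coords m t f i ^ 2))"

definition from_sphere :: "(nat \<Rightarrow> real) \<Rightarrow> 'e \<Rightarrow> real" where
  "from_sphere y = (\<lambda>e. vertex_lift m t y e / sum (vertex_lift m t y) (t ` {..<3*m}))"

lemma to_sphere_in_sphere_coords: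
  assumes f: "f \<in> realization_points (t ` {..<3*m}) (triangle_boundaries_join m t)"
  shows "to_sphere f \<in> sphere_coords (2*m)"
  using block_coords_sum_squares_pos[OF f]
  by (simp add: sphere_coords_def to_sphere_def block_coords_def power_divide
        sum_divide_distrib[symmetric])

lemma from_sphere_in_realization_points:
  assumes y: "y \<in> sphere_coords (2*m)"
  shows "from_sphere y \<in> realization_points (t ` {..<3*m}) (triangle_boundaries_join m t)"
  unfolding mem_realization_points_triangle_boundaries_join
proof (intro conjI allI impI)
  define s where "s = sum (vertex_lift m t y) (t ` {..<3*m})"
  have s: "s > 0" using vertex_lift_sum_pos[OF y] unfolding s_def .
  fix v j
  show "0 \<le> from_sphere y v"
    using s unfolding from_sphere_def s_def[symmetric] vertex_lift_def by (simp add: block_lift_nonneg)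
  show "v \<notin> t ` {..<3*m} \<Longrightarrow> from_sphere y v = 0"
    unfolding from_sphere_def vertex_lift_def by simp
  show "sum (from_sphere y) (t ` {..<3*m}) = 1"
    using s unfolding from_sphere_def s_def[symmetric] by (simp add: sum_divide_distrib[symmetric] s_def)
  assume "j < m"
  then have k: "3*j < 3*m" "3*j+1 < 3*m" "3*j+2 < 3*m" by auto
  show "from_sphere y (t (3*j)) = 0 \<or> from_sphere y (t (3*j+1)) = 0 \<or> from_sphere y (t (3*j+2)) = 0"
    using block_lift_has_zero[of y j]
    unfolding from_sphere_def vertex_lift_t[OF k(1)] vertex_lift_t[OF k(2)] vertex_lift_t[OF k(3)]
    by auto
qed

lemma from_sphere_to_sphere:
  assumes f: "f \<in> realization_points (t ` {..<3*m}) (triangle_boundaries_join m t)"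
  shows "from_sphere (to_sphere f) = f"
proof
  fix e
  define N where "N = sqrt (\<Sum>i<2*m. block_coords m t f i ^ 2)"
  have N: "N > 0" using block_coords_sum_squares_pos[OF f] unfolding N_def by simp
  have lift_coords: "vertex_lift m t (block_coords m t f) e' = f e'" for e'
  proof (cases "e' \<in> t ` {..<3*m}")
    case True
    then obtain k where "k < 3*m" "e' = t k" by auto
    then show ?thesis using block_lift_block_coords[OF f] vertex_lift_t by simp
  next
    case False
    then show ?thesis
      using f unfolding vertex_lift_def mem_realization_points_triangle_boundaries_join by auto
  qed
  have lift: "vertex_lift m t (to_sphere f) e' = f e' / N" for e'
    unfolding to_sphere_def N_def[symmetric] vertex_lift_divide[OF N] lift_coords ..
  have "sum f (t ` {..<3*m}) = 1"
    using f unfolding mem_realization_points_triangle_boundaries_join by simp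
  then have "sum (vertex_lift m t (to_sphere f)) (t ` {..<3*m}) = 1 / N"
    unfolding lift by (simp add: sum_divide_distrib[symmetric])
  then show "from_sphere (to_sphere f) e = f e"
    unfolding from_sphere_def lift using N by simp
qed

lemma to_sphere_from_sphere:
  assumes y: "y \<in> sphere_coords (2*m)"
  shows "to_sphere (from_sphere y) = y"
proof
  fix i
  define s where "s = sum (vertex_lift m t y) (t ` {..<3*m})"
  have s: "s > 0" using vertex_lift_sum_pos[OF y] unfolding s_def .
  have coords: "block_coords m t (from_sphere y) i' = block_coords m t (vertex_lift m t y) i' / s" for i'
    unfolding from_sphere_def s_def[symmetric] by (rule block_coords_divide)
  have "(\<Sum>i<2*m. block_coords m t (from_sphere y) i ^ 2) = (\<Sum>i<2*m. y i ^ 2) / s^2"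
    by (simp add: coords block_coords_vertex_lift power_divide sum_divide_distrib)
  then have norm: "sqrt (\<Sum>i<2*m. block_coords m t (from_sphere y) i ^ 2) = 1 / s"
    using y s by (simp add: sphere_coords_def real_sqrt_divide)
  show "to_sphere (from_sphere y) i = y i"
  proof (cases "i < 2*m")
    case True
    then show ?thesis unfolding to_sphere_def norm using s by (simp add: coords block_coords_vertex_lift)
  next
    case False
    then show ?thesis using y unfolding to_sphere_def sphere_coords_def block_coords_def by simp
  qed
qed

lemma triangle_boundaries_join_homeomorphic_nsphere:
  "geom_realization (t ` {..<3*m}) (triangle_boundaries_join m t) homeomorphic_space nsphere (2*m - 1)"
proof -
  define X where "X = subtopology (powertop_real UNIV)
    (realization_points (t ` {..<3*m}) (triangle_boundaries_join m t))"
  define Y where "Y = subtopology (powertop_real UNIV) (sphere_coords (2*m))"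
  have "continuous_map X Y to_sphere"
    unfolding X_def Y_def continuous_map_in_subtopology continuous_map_componentwise_UNIV
  proof (intro conjI allI)
    fix i
    show "continuous_map (subtopology (powertop_real UNIV)
        (realization_points (t ` {..<3*m}) (triangle_boundaries_join m t))) euclideanreal (\<lambda>f. to_sphere f i)"
      unfolding to_sphere_def
      by (intro continuous_map_real_divide continuous_map_block_coords continuous_map_sqrt
          continuous_map_sum continuous_map_real_pow finite_lessThan)
        (use block_coords_sum_squares_pos in force)
  qed (use to_sphere_in_sphere_coords in auto)
  moreover have "continuous_map Y X from_sphere"
    unfolding X_def Y_def continuous_map_in_subtopology continuous_map_componentwise_UNIV
  proof (intro conjI allI)
    fix e
    show "continuous_map (subtopology (powertop_real UNIV) (sphere_coords (2*m))) euclideanreal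
        (\<lambda>y. from_sphere y e)"
      unfolding from_sphere_def
      by (intro continuous_map_real_divide continuous_map_vertex_lift continuous_map_sum
          finite_imageI finite_lessThan)
        (use vertex_lift_sum_pos in force)
  qed (use from_sphere_in_realization_points in auto)
  ultimately have "homeomorphic_maps X Y to_sphere from_sphere"
    unfolding homeomorphic_maps_def X_def Y_def
    using from_sphere_to_sphere to_sphere_from_sphere by auto
  moreover have "nsphere (2*m - 1) = Y"
    unfolding Y_def nsphere_eq_sphere_coords using m_pos by simp
  ultimately show ?thesis
    unfolding geom_realization_eq homeomorphic_space_def X_def by blast
qed

end

lemma UN_triples_eq_image:
  fixes t :: "nat \<Rightarrow> 'e"
  shows "(\<Union>j<m. {t (3*j), t (3*j+1), t (3*j+2)}) = t ` {..<3*m}"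
proof -
  have "{..<3*m} = (\<Union>j<m. {3*j, 3*j+1, 3*j+2})"
  proof (intro equalityI subsetI)
    fix k assume "k \<in> {..<3*m}"
    then have "k div 3 < m" "k = 3*(k div 3) \<or> k = 3*(k div 3)+1 \<or> k = 3*(k div 3)+2" by auto
    then show "k \<in> (\<Union>j<m. {3*j, 3*j+1, 3*j+2})" by blast
  qed auto
  then show ?thesis by auto
qed

lemma enumerate_disjoint_triples:
  assumes finV: "finite V" and card3: "\<forall>v\<in>V. card (S v) = 3" and disj: "disjoint_family_on S V"
  obtains t where "inj_on t {..<3 * card V}"
    and "S ` V = (\<lambda>j. {t (3*j), t (3*j+1), t (3*j+2)}) ` {..<card V}"
proof -
  define m where "m = card V"
  obtain idx where idx: "bij_betw idx {..<m} V"
    using ex_bij_betw_nat_finite[OF finV] unfolding m_def atLeast0LessThan by blast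
  have finS: "finite (S v)" if "v \<in> V" for v
    using card3 that by (metis card.infinite zero_neq_numeral)
  have "\<exists>g. bij_betw g {..<3::nat} (S v)" if "v \<in> V" for v
    using ex_bij_betw_nat_finite[OF finS[OF that]] card3 that by (simp add: atLeast0LessThan)
  then obtain g where g: "\<And>v. v \<in> V \<Longrightarrow> bij_betw (g v) {..<3::nat} (S v)" by metis
  define t where "t k = g (idx (k div 3)) (k mod 3)" for k
  have triple: "S (idx j) = {t (3*j), t (3*j+1), t (3*j+2)}" if j: "j < m" for j
  proof -
    have "idx j \<in> V" using idx j by (auto simp: bij_betw_def)
    then have "S (idx j) = g (idx j) ` {0, 1, 2}" using g by (auto simp: bij_betw_def lessThan_nat_numeral)
    moreover have "(3*j+1) div 3 = j" "(3*j+1) mod 3 = 1" "(3*j+2) div 3 = j" "(3*j+2) mod 3 = 2"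
      by presburger+
    ultimately show ?thesis unfolding t_def by simp
  qed
  have image: "S ` V = (\<lambda>j. {t (3*j), t (3*j+1), t (3*j+2)}) ` {..<m}"
    using triple idx unfolding bij_betw_def by (auto simp: image_comp[symmetric])
  have "card (t ` {..<3*m}) = card (\<Union>(S ` V))"
    unfolding UN_triples_eq_image[symmetric] image by simp
  also have "\<dots> = (\<Sum>v\<in>V. card (S v))"
    using finV finS disj by (intro card_UN_disjoint) (auto simp: disjoint_family_on_def)
  also have "\<dots> = card {..<3*m}" using card3 unfolding m_def by simp
  finally have "inj_on t {..<3*m}" by (simp add: eq_card_imp_inj_on)
  then show ?thesis using that image unfolding m_def by blast
qed

lemma join_of_triangle_boundaries_homeomorphic_nsphere:
  assumes "finite V" and "V \<noteq> {}" and "\<forall>v\<in>V. card (S v) = 3" and "disjoint_family_on S V"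
  shows "geom_realization (\<Union>(S ` V)) {F. F \<subseteq> \<Union>(S ` V) \<and> (\<forall>v\<in>V. \<not> S v \<subseteq> F)}
           homeomorphic_space nsphere (2 * card V - 1)"
proof -
  obtain t where inj: "inj_on t {..<3 * card V}"
    and image: "S ` V = (\<lambda>j. {t (3*j), t (3*j+1), t (3*j+2)}) ` {..<card V}"
    using enumerate_disjoint_triples assms by blast
  have U: "\<Union>(S ` V) = t ` {..<3 * card V}"
    unfolding image UN_triples_eq_image[symmetric] by simp
  have "(\<forall>v\<in>V. \<not> S v \<subseteq> F) \<longleftrightarrow> (\<forall>X\<in>S ` V. \<not> X \<subseteq> F)" for F by blast
  then have "{F. F \<subseteq> \<Union>(S ` V) \<and> (\<forall>v\<in>V. \<not> S v \<subseteq> F)} = triangle_boundaries_join (card V) t"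
    unfolding triangle_boundaries_join_def U[symmetric] image by auto
  moreover have "card V \<ge> 1" using assms by (simp add: Suc_le_eq card_gt_0_iff)
  ultimately show ?thesis
    unfolding U using triangle_boundaries_join_homeomorphic_nsphere inj by metis
qed

section \<open>Claws and 2-matchings of clawed graphs\<close>

definition claw :: "'a set \<Rightarrow> 'a set set \<Rightarrow> 'a \<Rightarrow> 'a cvert set set" where
  "claw V E v = {x \<in> clawed_edges V E. Orig v \<in> x}"

lemma mem_clawed_edges:
  "x \<in> clawed_edges V E \<longleftrightarrow>
     (\<exists>u e. x = {Orig u, Sub e} \<and> e \<in> E \<and> u \<in> e)
     \<or> (\<exists>v i. x = {Orig v, Leaf v i} \<and> v \<in> V \<and> i < 3 - vdeg E v)"
  unfolding clawed_edges_def by blast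

lemma claw_eq:
  assumes "v \<in> V"
  shows "claw V E v = (\<lambda>e. {Orig v, Sub e}) ` {e \<in> E. v \<in> e} \<union> (\<lambda>i. {Orig v, Leaf v i}) ` {..<3 - vdeg E v}"
  using assms unfolding claw_def mem_clawed_edges by (auto simp: doubleton_eq_iff)

lemma card_claw:
  assumes "finite E" "v \<in> V" "vdeg E v \<le> 3"
  shows "card (claw V E v) = 3"
proof -
  have "inj_on (\<lambda>e. {Orig v, Sub e}) {e \<in> E. v \<in> e}" "inj_on (\<lambda>i. {Orig v, Leaf v i}) {..<3 - vdeg E v}"
    by (auto simp: inj_on_def doubleton_eq_iff)
  moreover have "(\<lambda>e. {Orig v, Sub e}) ` {e \<in> E. v \<in> e} \<inter> (\<lambda>i. {Orig v, Leaf v i}) ` {..<3 - vdeg E v} = {}"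
    by (auto simp: doubleton_eq_iff)
  ultimately have "card (claw V E v) = vdeg E v + (3 - vdeg E v)"
    unfolding claw_eq[OF assms(2)] vdeg_def using assms(1) by (simp add: card_Un_disjoint card_image)
  then show ?thesis using assms(3) by simp
qed

lemma disjoint_family_claw: "disjoint_family_on (claw V E) A"
  unfolding disjoint_family_on_def claw_def mem_clawed_edges by (auto simp: doubleton_eq_iff)

lemma clawed_edge_Orig_mem:
  assumes "\<forall>e\<in>E. e \<subseteq> V" "x \<in> clawed_edges V E" "Orig v \<in> x"
  shows "v \<in> V"
  using assms unfolding mem_clawed_edges by auto

lemma Union_claws:
  assumes "\<forall>e\<in>E. e \<subseteq> V"
  shows "\<Union>(claw V E ` V) = clawed_edges V E"
proof (intro equalityI subsetI)
  fix x assume x: "x \<in> clawed_edges V E"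
  then obtain v where "Orig v \<in> x" unfolding mem_clawed_edges by blast
  with x show "x \<in> \<Union>(claw V E ` V)"
    using clawed_edge_Orig_mem[OF assms] unfolding claw_def by blast
qed (auto simp: claw_def)

lemma card_clawed_edges_at_Sub:
  assumes "\<forall>e\<in>E. card e = 2" "F \<subseteq> clawed_edges V E"
  shows "card {x \<in> F. Sub e \<in> x} \<le> 2"
proof (cases "e \<in> E")
  case True
  have "{x \<in> F. Sub e \<in> x} \<subseteq> (\<lambda>u. {Orig u, Sub e}) ` e"
  proof
    fix x assume "x \<in> {x \<in> F. Sub e \<in> x}"
    then have "x \<in> clawed_edges V E" "Sub e \<in> x" using assms(2) by auto
    then show "x \<in> (\<lambda>u. {Orig u, Sub e}) ` e" unfolding mem_clawed_edges by auto
  qed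
  moreover have "finite e" using True assms(1) by (metis card.infinite zero_neq_numeral)
  ultimately have "card {x \<in> F. Sub e \<in> x} \<le> card e"
    by (meson card_image_le card_mono finite_imageI order_trans)
  then show ?thesis using True assms(1) by simp
next
  case False
  have "x \<notin> F" if "Sub e \<in> x" for x
    using False assms(2) that unfolding subset_iff mem_clawed_edges by auto
  then have "{x \<in> F. Sub e \<in> x} = {}" by blast
  then show ?thesis by (metis card.empty le0)
qed

lemma card_clawed_edges_at_Leaf:
  assumes "F \<subseteq> clawed_edges V E"
  shows "card {x \<in> F. Leaf v i \<in> x} \<le> 1"
proof -
  have "{x \<in> F. Leaf v i \<in> x} \<subseteq> {{Orig v, Leaf v i}}"
  proof
    fix x assume "x \<in> {x \<in> F. Leaf v i \<in> x}"
    then have "x \<in> clawed_edges V E" "Leaf v i \<in> x" using assms by auto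
    then show "x \<in> {{Orig v, Leaf v i}}" unfolding mem_clawed_edges by auto
  qed
  then show ?thesis using card_mono[of "{{Orig v, Leaf v i}}"] by simp
qed

lemma card_clawed_edges_at_Orig:
  assumes "\<forall>e\<in>E. e \<subseteq> V" "finite E" "\<forall>v\<in>V. vdeg E v \<le> 3"
    and F: "F \<subseteq> clawed_edges V E" "\<forall>v\<in>V. \<not> claw V E v \<subseteq> F"
  shows "card {x \<in> F. Orig v \<in> x} \<le> 2"
proof (cases "v \<in> V")
  case True
  have "{x \<in> F. Orig v \<in> x} \<subseteq> claw V E v" using F(1) unfolding claw_def by auto
  moreover have "{x \<in> F. Orig v \<in> x} \<noteq> claw V E v" using F(2) True by blast
  ultimately have "{x \<in> F. Orig v \<in> x} \<subset> claw V E v" by (rule psubsetI)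
  moreover have card3: "card (claw V E v) = 3" using card_claw[OF assms(2) True] assms(3) True by simp
  moreover have "finite (claw V E v)" using card3 by (metis card.infinite zero_neq_numeral)
  ultimately have "card {x \<in> F. Orig v \<in> x} < 3" by (metis psubset_card_mono)
  then show ?thesis by simp
next
  case False
  then have "{x \<in> F. Orig v \<in> x} = {}" using assms(1) F(1) clawed_edge_Orig_mem[of E V] by auto
  then show ?thesis by (metis card.empty le0)
qed

lemma two_matchings_clawed_edges:
  assumes E: "\<forall>e\<in>E. card e = 2 \<and> e \<subseteq> V" and "finite E" and deg: "\<forall>v\<in>V. vdeg E v \<le> 3"
  shows "two_matchings (clawed_edges V E) = {F. F \<subseteq> clawed_edges V E \<and> (\<forall>v\<in>V. \<not> claw V E v \<subseteq> F)}"
proof (intro set_eqI iffI)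
  fix F assume F: "F \<in> two_matchings (clawed_edges V E)"
  have "\<not> claw V E v \<subseteq> F" if v: "v \<in> V" for v
  proof
    assume "claw V E v \<subseteq> F"
    then have "{x \<in> F. Orig v \<in> x} = claw V E v" using F unfolding two_matchings_def claw_def by auto
    then have "card {x \<in> F. Orig v \<in> x} = 3" using card_claw[OF \<open>finite E\<close> v] deg v by simp
    moreover have "card {x \<in> F. Orig v \<in> x} \<le> 2" using F unfolding two_matchings_def by blast
    ultimately show False by simp
  qed
  then show "F \<in> {F. F \<subseteq> clawed_edges V E \<and> (\<forall>v\<in>V. \<not> claw V E v \<subseteq> F)}"
    using F unfolding two_matchings_def by auto
next
  fix F assume F: "F \<in> {F. F \<subseteq> clawed_edges V E \<and> (\<forall>v\<in>V. \<not> claw V E v \<subseteq> F)}"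
  then have sub: "F \<subseteq> clawed_edges V E" and no_claw: "\<forall>v\<in>V. \<not> claw V E v \<subseteq> F" by simp_all
  have "card {x \<in> F. y \<in> x} \<le> 2" for y
  proof (cases y)
    case (Orig v)
    then show ?thesis using card_clawed_edges_at_Orig[OF _ \<open>finite E\<close> deg sub no_claw] E by simp
  next
    case (Sub e)
    then show ?thesis using card_clawed_edges_at_Sub[OF _ sub] E by simp
  next
    case (Leaf v i)
    then show ?thesis using card_clawed_edges_at_Leaf[OF sub, of v i] by simp
  qed
  then show "F \<in> two_matchings (clawed_edges V E)" using sub unfolding two_matchings_def by blast
qed

lemma M2_clawed_edges_homeomorphic_nsphere:
  assumes "finite V" "V \<noteq> {}" and E: "\<forall>e\<in>E. card e = 2 \<and> e \<subseteq> V"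
    and deg: "\<forall>v\<in>V. vdeg E v \<le> 3"
  shows "M2 (clawed_edges V E) homeomorphic_space nsphere (2 * card V - 1)"
proof -
  have "finite E" using E \<open>finite V\<close> by (meson Pow_iff finite_Pow_iff rev_finite_subset subsetI)
  have U: "\<Union>(claw V E ` V) = clawed_edges V E" using E by (intro Union_claws) auto
  have "M2 (clawed_edges V E) = geom_realization (\<Union>(claw V E ` V))
      {F. F \<subseteq> \<Union>(claw V E ` V) \<and> (\<forall>v\<in>V. \<not> claw V E v \<subseteq> F)}"
    unfolding M2_def two_matchings_clawed_edges[OF E \<open>finite E\<close> deg] U ..
  also have "\<dots> homeomorphic_space nsphere (2 * card V - 1)"
    using assms card_claw[OF \<open>finite E\<close>]
    by (intro join_of_triangle_boundaries_homeomorphic_nsphere disjoint_family_claw) auto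
  finally show ?thesis .
qed

section \<open>Clawed paths and cycles\<close>

lemma vdeg_le_card_cover:
  assumes "finite I" "{e \<in> E. v \<in> e} \<subseteq> h ` I"
  shows "vdeg E v \<le> card I"
  unfolding vdeg_def using assms by (meson card_image_le card_mono finite_imageI order_trans)

lemma path_edges_simple: "\<forall>e\<in>path_edges k. card e = 2 \<and> e \<subseteq> {0..k}"
  unfolding path_edges_def by auto

lemma vdeg_path_edges: "vdeg (path_edges k) v \<le> 2"
proof -
  have "{e \<in> path_edges k. v \<in> e} \<subseteq> (\<lambda>i. {i, Suc i}) ` {v, v - 1}"
    unfolding path_edges_def by auto
  then have "vdeg (path_edges k) v \<le> card {v, v - 1}" by (rule vdeg_le_card_cover[rotated]) simp
  also have "\<dots> \<le> 2" by (simp add: card_insert_if)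
  finally show ?thesis .
qed

lemma cycle_edges_simple:
  assumes "n \<ge> 2"
  shows "\<forall>e\<in>cycle_edges n. card e = 2 \<and> e \<subseteq> {0..<n}"
proof
  fix e assume "e \<in> cycle_edges n"
  then obtain i where i: "i < n" "e = {i, Suc i mod n}" unfolding cycle_edges_def by auto
  have "i \<noteq> Suc i mod n"
  proof (cases "Suc i < n")
    case False
    then have "Suc i = n" using i(1) by simp
    then show ?thesis using assms by simp
  qed simp
  then show "card e = 2 \<and> e \<subseteq> {0..<n}" using i by auto
qed

lemma vdeg_cycle_edges: "vdeg (cycle_edges n) v \<le> 2"
proof -
  have "{e \<in> cycle_edges n. v \<in> e} \<subseteq> (\<lambda>i. {i, Suc i mod n}) ` {v, (v + n - 1) mod n}"
  proof
    fix e assume "e \<in> {e \<in> cycle_edges n. v \<in> e}"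
    then obtain i where i: "i < n" "e = {i, Suc i mod n}" and v: "v = i \<or> v = Suc i mod n"
      unfolding cycle_edges_def by auto
    have "i \<in> {v, (v + n - 1) mod n}"
    proof (cases "Suc i < n")
      case False
      then have "Suc i = n" using i(1) by simp
      then show ?thesis using v by auto
    qed (use v in auto)
    then show "e \<in> (\<lambda>i. {i, Suc i mod n}) ` {v, (v + n - 1) mod n}" using i by auto
  qed
  then have "vdeg (cycle_edges n) v \<le> card {v, (v + n - 1) mod n}"
    by (rule vdeg_le_card_cover[rotated]) simp
  also have "\<dots> \<le> 2" by (simp add: card_insert_if)
  finally show ?thesis .
qed

lemma M2_CP_homeomorphic_nsphere: "M2 (CP k) homeomorphic_space nsphere (2 * k + 1)"
proof -
  have "M2 (CP k) homeomorphic_space nsphere (2 * card {0..k} - 1)"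
    unfolding CP_def using path_edges_simple
    by (intro M2_clawed_edges_homeomorphic_nsphere) (auto intro: le_trans[OF vdeg_path_edges])
  then show ?thesis by simp
qed

lemma M2_CC_homeomorphic_nsphere:
  assumes "n \<ge> 2"
  shows "M2 (CC n) homeomorphic_space nsphere (2 * n - 1)"
proof -
  have "M2 (CC n) homeomorphic_space nsphere (2 * card {0..<n} - 1)"
    unfolding CC_def using assms cycle_edges_simple[OF assms]
    by (intro M2_clawed_edges_homeomorphic_nsphere) (auto intro: le_trans[OF vdeg_cycle_edges])
  then show ?thesis by simp
qed

theorem mainTheorem11:
  fixes n :: nat
  assumes "n \<ge> 3"
  shows "M2 (CP (n - 1)) homotopy_equivalent_space M2 (CC n)
       \<and> M2 (CC n) homotopy_equivalent_space nsphere (2 * n - 1)"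
proof -
  have "2 * (n - 1) + 1 = 2 * n - 1" using assms by simp
  then have CP: "M2 (CP (n - 1)) homotopy_equivalent_space nsphere (2 * n - 1)"
    using M2_CP_homeomorphic_nsphere[of "n - 1"] homeomorphic_imp_homotopy_equivalent_space by metis
  have CC: "M2 (CC n) homotopy_equivalent_space nsphere (2 * n - 1)"
    using assms by (intro homeomorphic_imp_homotopy_equivalent_space M2_CC_homeomorphic_nsphere) simp
  show ?thesis
    using CP CC homotopy_equivalent_space_sym homotopy_eqv_trans by blast
qed

end
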